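(* Let $K$ be a compact Hausdorff space and let $p\in K$ be a non-$P$-point of $K$, i.e. there exists $g\in C(K)$ which is not constant on any open neighbourhood of $p$. Then the Banach space $C(K,p)=\{f\in C(K): f(p)=0\}$ (with the sup norm) fails the ball fixed point property.
   Context: $C(K)$ is the real Banach space of continuous functions on $K$ with the sup norm. A real Banach space $X$ has the ball fixed point property (BFPP) if every nonexpansive map $T\colon B_X\to B_X$ (i.e. $\|Tx-Ty\|\le\|x-y\|$) has a fixed point, where $B_X$ is the closed unit ball. *)

theory Defs
  imports "HOL-Analysis.Analysis"
begin

text \<open>Elements of C(K) are represented by functions 'a => real that are continuous
  on X; values outside topspace X are irrelevant.\<close>
definition sup_norm :: "'a topology \<Rightarrow> ('a \<Rightarrow> real) \<Rightarrow> real" where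
  "sup_norm X f = Sup ((\<lambda>x. \<bar>f x\<bar>) ` topspace X)"

definition CKp_ball :: "'a topology \<Rightarrow> 'a \<Rightarrow> ('a \<Rightarrow> real) set" where
  "CKp_ball X p = {f. continuous_map X euclideanreal f \<and> f p = 0 \<and> sup_norm X f \<le> 1}"

definition non_P_point :: "'a topology \<Rightarrow> 'a \<Rightarrow> bool" where
  "non_P_point X p \<longleftrightarrow> (\<exists>g. continuous_map X euclideanreal g \<and>
      (\<forall>U. openin X U \<and> p \<in> U \<longrightarrow> (\<exists>x\<in>U. \<exists>y\<in>U. g x \<noteq> g y)))"

definition CKp_BFPP :: "'a topology \<Rightarrow> 'a \<Rightarrow> bool" where
  "CKp_BFPP X p \<longleftrightarrow>
     (\<forall>T. T ` CKp_ball X p \<subseteq> CKp_ball X p \<and>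
          (\<forall>f\<in>CKp_ball X p. \<forall>h\<in>CKp_ball X p. sup_norm X (\<lambda>x. T f x - T h x) \<le> sup_norm X (\<lambda>x. f x - h x))
        \<longrightarrow> (\<exists>f\<in>CKp_ball X p. \<forall>x\<in>topspace X. T f x = f x))"

end

theory Submission
  imports Defs
begin

text \<open>Let \<open>h \<in> C(K,p)\<close> be nonnegative. The map \<open>f \<mapsto> min 1 (f + h)\<close> is a
  nonexpansive self-map of the unit ball of \<open>C(K,p)\<close>, and any fixed point \<open>f\<close> equals \<open>1\<close>
  wherever \<open>h > 0\<close>. If \<open>p\<close> is a non-P-point, \<open>h\<close> can be chosen not to vanish identically
  on any neighbourhood of \<open>p\<close>; then such an \<open>f\<close> takes the value \<open>1\<close> arbitrarily close to
  \<open>p\<close>, contradicting \<open>f p = 0\<close> and continuity. Compactness serves only to make the sup norm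
  finite.\<close>

lemma abs_le_sup_norm:
  assumes "compact_space X" "continuous_map X euclideanreal f" "x \<in> topspace X"
  shows "\<bar>f x\<bar> \<le> sup_norm X f"
proof -
  have "compactin euclideanreal (f ` topspace X)"
    using assms(1) by (intro image_compactin[OF _ assms(2)]) (simp add: compact_space_def)
  then have "bounded (f ` topspace X)"
    by (simp add: compact_imp_bounded)
  then obtain B where "\<forall>y\<in>f ` topspace X. \<bar>y\<bar> \<le> B"
    by (auto simp: bounded_real)
  then have "bdd_above ((\<lambda>x. \<bar>f x\<bar>) ` topspace X)"
    by (auto intro!: bdd_aboveI[where M = B])
  then show ?thesis
    unfolding sup_norm_def using assms(3) by (rule cSUP_upper2) simp
qed

lemma sup_norm_le:
  assumes "topspace X \<noteq> {}" "\<And>x. x \<in> topspace X \<Longrightarrow> \<bar>f x\<bar> \<le> c"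
  shows "sup_norm X f \<le> c"
  unfolding sup_norm_def using assms by (rule cSUP_least)

lemma CKp_ball_abs_le_1:
  assumes "compact_space X" "f \<in> CKp_ball X p" "x \<in> topspace X"
  shows "\<bar>f x\<bar> \<le> 1"
  using abs_le_sup_norm[OF assms(1) _ assms(3), of f] assms(2)
  by (auto simp: CKp_ball_def)

definition truncated_shift :: "('a \<Rightarrow> real) \<Rightarrow> ('a \<Rightarrow> real) \<Rightarrow> 'a \<Rightarrow> real" where
  "truncated_shift h f = (\<lambda>x. min 1 (f x + h x))"

lemma truncated_shift_in_CKp_ball:
  assumes "compact_space X" "p \<in> topspace X"
    and "continuous_map X euclideanreal h" "h p = 0" "\<And>x. h x \<ge> 0"
    and "f \<in> CKp_ball X p"
  shows "truncated_shift h f \<in> CKp_ball X p"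
proof -
  have "continuous_map X euclideanreal f" "f p = 0"
    using assms(6) by (auto simp: CKp_ball_def)
  moreover have "\<bar>truncated_shift h f x\<bar> \<le> 1" if "x \<in> topspace X" for x
    using CKp_ball_abs_le_1[OF assms(1,6) that] assms(5)[of x]
    by (auto simp: truncated_shift_def)
  moreover have "continuous_map X euclideanreal (truncated_shift h f)"
    unfolding truncated_shift_def by (intro continuous_intros calculation(1) assms(3))
  ultimately show ?thesis
    using assms(2,4)
    by (auto simp: CKp_ball_def truncated_shift_def intro!: sup_norm_le)
qed

lemma truncated_shift_nonexpansive:
  assumes "compact_space X" "p \<in> topspace X"
    and "f \<in> CKp_ball X p" "k \<in> CKp_ball X p"
  shows "sup_norm X (\<lambda>x. truncated_shift h f x - truncated_shift h k x)
           \<le> sup_norm X (\<lambda>x. f x - k x)"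
proof (rule sup_norm_le)
  show "topspace X \<noteq> {}" using assms(2) by blast
next
  fix x assume x: "x \<in> topspace X"
  have "continuous_map X euclideanreal (\<lambda>x. f x - k x)"
    using assms(3,4) by (auto simp: CKp_ball_def intro: continuous_map_diff)
  then have "\<bar>f x - k x\<bar> \<le> sup_norm X (\<lambda>x. f x - k x)"
    using abs_le_sup_norm[OF assms(1) _ x] by blast
  moreover have "\<bar>truncated_shift h f x - truncated_shift h k x\<bar> \<le> \<bar>f x - k x\<bar>"
    by (auto simp: truncated_shift_def min_def)
  ultimately show "\<bar>truncated_shift h f x - truncated_shift h k x\<bar>
                     \<le> sup_norm X (\<lambda>x. f x - k x)"
    by linarith
qed

lemma truncated_shift_fixed_point_eq_1:
  assumes "truncated_shift h f x = f x" "h x > 0"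
  shows "f x = 1"
  using assms by (auto simp: truncated_shift_def min_def split: if_splits)

lemma non_P_point_nonneg_witness:
  assumes "non_P_point X p"
  obtains h where "continuous_map X euclideanreal h" "h p = 0" "\<And>x. 0 \<le> h x"
    and "\<And>U. openin X U \<Longrightarrow> p \<in> U \<Longrightarrow> \<exists>x\<in>U. h x > 0"
proof -
  obtain g where g: "continuous_map X euclideanreal g"
    and nonconst: "\<And>U. openin X U \<Longrightarrow> p \<in> U \<Longrightarrow> \<exists>x\<in>U. \<exists>y\<in>U. g x \<noteq> g y"
    using assms unfolding non_P_point_def by blast
  let ?h = "\<lambda>x. \<bar>g x - g p\<bar>"
  have "\<exists>x\<in>U. ?h x > 0" if "openin X U" "p \<in> U" for U
    using nonconst[OF that] by (metis zero_less_abs_iff right_minus_eq)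
  moreover have "continuous_map X euclideanreal ?h"
    by (intro continuous_intros g)
  ultimately show thesis
    by (intro that[of ?h]) auto
qed

lemma CKp_BFPP_fixed_point:
  assumes "CKp_BFPP X p" "T ` CKp_ball X p \<subseteq> CKp_ball X p"
    and "\<And>f k. f \<in> CKp_ball X p \<Longrightarrow> k \<in> CKp_ball X p \<Longrightarrow>
           sup_norm X (\<lambda>x. T f x - T k x) \<le> sup_norm X (\<lambda>x. f x - k x)"
  obtains f where "f \<in> CKp_ball X p" "\<And>x. x \<in> topspace X \<Longrightarrow> T f x = f x"
proof -
  have "\<exists>f\<in>CKp_ball X p. \<forall>x\<in>topspace X. T f x = f x"
    using assms(1)[unfolded CKp_BFPP_def, THEN spec[of _ T]] assms(2,3) by blast
  then show thesis using that by blast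
qed

theorem mainTheorem16:
  fixes X :: "'a topology" and p :: 'a
  assumes "compact_space X" and "Hausdorff_space X"
    and "p \<in> topspace X" and "non_P_point X p"
  shows "\<not> CKp_BFPP X p"
proof
  assume "CKp_BFPP X p"
  obtain h where h: "continuous_map X euclideanreal h" "h p = 0" "\<And>x. 0 \<le> h x"
    and h_pos: "\<And>U. openin X U \<Longrightarrow> p \<in> U \<Longrightarrow> \<exists>x\<in>U. h x > 0"
    using non_P_point_nonneg_witness[OF assms(4)] by blast
  have "truncated_shift h ` CKp_ball X p \<subseteq> CKp_ball X p"
    using truncated_shift_in_CKp_ball[OF assms(1,3) h] by blast
  then obtain f where f: "f \<in> CKp_ball X p"
    and fixed: "\<And>x. x \<in> topspace X \<Longrightarrow> truncated_shift h f x = f x"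
    using CKp_BFPP_fixed_point[OF \<open>CKp_BFPP X p\<close>] truncated_shift_nonexpansive[OF assms(1,3)]
    by blast
  have "continuous_map X euclideanreal f" "f p = 0"
    using f by (auto simp: CKp_ball_def)
  then have "openin X {x \<in> topspace X. f x < 1/2}" "p \<in> {x \<in> topspace X. f x < 1/2}"
    using assms(3) openin_continuous_map_preimage[of X euclideanreal f "{..<1/2}"] by auto
  then obtain x where x: "x \<in> topspace X" "f x < 1/2" "h x > 0"
    using h_pos by blast
  then have "f x = 1"
    using truncated_shift_fixed_point_eq_1[OF fixed] by blast
  with x show False by simp
qed

end
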